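(* Let \(\mathcal{H}=(A,(H_i)_{i=1}^k)\) and \(\mathcal{K}=(B,(K_i)_{i=1}^k)\) be \(k\)-relational F-hypergraphs and \(f\colon\mathcal{H}\to\mathcal{K}\) a map of \(k\)-relational F-hypergraphs. The following are equivalent: (i) \(f\) is a positional reduction; (ii) the equivalence relation \(E=\{(a,a')\in A\times A\mid f(a)=f(a')\}\) is a regular equivalence on \((A,H_i)\) for each \(i\in\{1,\dots,k\}\), and \((B,K_i)=(A/E,H_i/E)\) for each \(i\) (with \(f\) the quotient map).
   Context: An F-hypergraph is \((A,H)\) with \(H\subseteq A\times\mathcal{P}(A)\) (hyperedges \((a,U)\)). A \(k\)-relational F-hypergraph is \((A,(H_i)_{i=1}^k)\) with each \((A,H_i)\) an F-hypergraph. A map \((A,(H_i))\to(B,(K_i))\) is a function \(f\colon A\to B\) with \((f(a),f(V))\in K_i\) whenever \((a,V)\in H_i\). It reflects hyperedges if for all \(a\in A\), all \(i\) and all \((f(a),U)\in K_i\) there is \(V\subseteq A\) with \((a,V)\in H_i\) and \(f(V)=U\). A positional reduction is a map that is surjective on vertices and reflects hyperedges. A regular equivalence on an F-hypergraph \((A,H)\) is an equivalence relation \(E\) on \(A\) such that for every \((a,a')\in E\) and every \((a,U)\in H\) there is \((a',U')\in H\) with: for each \(u\in U\) some \(u'\in U'\) has \((u,u')\in E\), and for each \(u'\in U'\) some \(u\in U\) has \((u,u')\in E\). For an equivalence relation \(E\) on \(A\), the blockmodel \(H/E\) is the F-hypergraph structure on the set of classes \(A/E\) in which \(([a],X)\)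 is a hyperedge iff there exists \((a,U)\in H\) with \(X=\{[u]\mid u\in U\}\). *)

theory Defs
  imports Main
begin

definition fhypergraph :: "'a set \<Rightarrow> ('a \<times> 'a set) set \<Rightarrow> bool" where
  "fhypergraph A H \<longleftrightarrow> H \<subseteq> A \<times> Pow A"

definition krel_fhypergraph :: "nat \<Rightarrow> 'a set \<Rightarrow> (nat \<Rightarrow> ('a \<times> 'a set) set) \<Rightarrow> bool" where
  "krel_fhypergraph k A H \<longleftrightarrow> (\<forall>i\<in>{1..k}. fhypergraph A (H i))"

definition krel_map ::
  "nat \<Rightarrow> 'a set \<Rightarrow> (nat \<Rightarrow> ('a \<times> 'a set) set) \<Rightarrow> 'b set \<Rightarrow> (nat \<Rightarrow> ('b \<times> 'b set) set)
   \<Rightarrow> ('a \<Rightarrow> 'b) \<Rightarrow> bool" where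
  "krel_map k A H B K f \<longleftrightarrow> (\<forall>a\<in>A. f a \<in> B) \<and>
     (\<forall>i\<in>{1..k}. \<forall>a V. (a, V) \<in> H i \<longrightarrow> (f a, f ` V) \<in> K i)"

definition reflects_hyperedges ::
  "nat \<Rightarrow> 'a set \<Rightarrow> (nat \<Rightarrow> ('a \<times> 'a set) set) \<Rightarrow> (nat \<Rightarrow> ('b \<times> 'b set) set)
   \<Rightarrow> ('a \<Rightarrow> 'b) \<Rightarrow> bool" where
  "reflects_hyperedges k A H K f \<longleftrightarrow>
     (\<forall>a\<in>A. \<forall>i\<in>{1..k}. \<forall>U. (f a, U) \<in> K i \<longrightarrow> (\<exists>V\<subseteq>A. (a, V) \<in> H i \<and> f ` V = U))"

definition positional_reduction ::
  "nat \<Rightarrow> 'a set \<Rightarrow> (nat \<Rightarrow> ('a \<times> 'a set) set) \<Rightarrow> 'b set \<Rightarrow> (nat \<Rightarrow> ('b \<times> 'b set) set)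
   \<Rightarrow> ('a \<Rightarrow> 'b) \<Rightarrow> bool" where
  "positional_reduction k A H B K f \<longleftrightarrow>
     krel_map k A H B K f \<and> f ` A = B \<and> reflects_hyperedges k A H K f"

definition regular_equivalence :: "'a set \<Rightarrow> ('a \<times> 'a set) set \<Rightarrow> 'a rel \<Rightarrow> bool" where
  "regular_equivalence A H E \<longleftrightarrow> equiv A E \<and>
     (\<forall>a a' U. (a, a') \<in> E \<longrightarrow> (a, U) \<in> H \<longrightarrow>
        (\<exists>U'. (a', U') \<in> H \<and> (\<forall>u\<in>U. \<exists>u'\<in>U'. (u, u') \<in> E)
                            \<and> (\<forall>u'\<in>U'. \<exists>u\<in>U. (u, u') \<in> E)))"

definition blockmodel :: "('a \<times> 'a set) set \<Rightarrow> 'a rel \<Rightarrow> ('a set \<times> 'a set set) set" where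
  "blockmodel H E = {(E `` {a}, (\<lambda>u. E `` {u}) ` U) | a U. (a, U) \<in> H}"

definition ker_rel :: "'a set \<Rightarrow> ('a \<Rightarrow> 'b) \<Rightarrow> 'a rel" where
  "ker_rel A f = {(a, a'). a \<in> A \<and> a' \<in> A \<and> f a = f a'}"

end

theory Submission
  imports Defs
begin

text \<open>
  A map f always sends a hyperedge (a, U) of H_i to the hyperedge (f a, f U) of K_i.
  Reflecting hyperedges at a then amounts to two facts: when f is onto, every hyperedge of K_i
  is such an image; and whenever f a = f a', each hyperedge (a, U) has a partner (a', U') with
  f U' = f U. For the kernel E of f, two subsets of A are E-related in the back-and-forth sense
  of regular equivalence exactly when they have the same image, so the second fact is
  regularity of E. Finally, f is onto precisely when it induces a bijection A/E \<rightarrow> B, and this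
  bijection carries the blockmodel H_i/E to the image of H_i under f.
\<close>

definition hyperedge_image :: "('a \<Rightarrow> 'b) \<Rightarrow> ('a \<times> 'a set) set \<Rightarrow> ('b \<times> 'b set) set" where
  "hyperedge_image f H = (\<lambda>(a, U). (f a, f ` U)) ` H"

definition reflects_edges ::
  "'a set \<Rightarrow> ('a \<times> 'a set) set \<Rightarrow> ('b \<times> 'b set) set \<Rightarrow> ('a \<Rightarrow> 'b) \<Rightarrow> bool" where
  "reflects_edges A H K f \<longleftrightarrow> (\<forall>a\<in>A. \<forall>U. (f a, U) \<in> K \<longrightarrow> (\<exists>V\<subseteq>A. (a, V) \<in> H \<and> f ` V = U))"

lemma hyperedge_image_iff:
  "(b, W) \<in> hyperedge_image f H \<longleftrightarrow> (\<exists>a U. (a, U) \<in> H \<and> b = f a \<and> W = f ` U)"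
  unfolding hyperedge_image_def by auto

lemma hyperedge_image_subset_iff:
  "hyperedge_image f H \<subseteq> K \<longleftrightarrow> (\<forall>a U. (a, U) \<in> H \<longrightarrow> (f a, f ` U) \<in> K)"
  unfolding hyperedge_image_def by auto

lemma hyperedge_image_comp: "hyperedge_image g (hyperedge_image h H) = hyperedge_image (g \<circ> h) H"
  unfolding hyperedge_image_def by (force simp: image_comp)

lemma hyperedge_image_cong:
  assumes "fhypergraph A H" and "\<And>a. a \<in> A \<Longrightarrow> f a = g a"
  shows "hyperedge_image f H = hyperedge_image g H"
proof -
  have "(\<lambda>(a, U). (f a, f ` U)) p = (\<lambda>(a, U). (g a, g ` U)) p" if "p \<in> H" for p
    using that assms unfolding fhypergraph_def by (cases p) (auto intro!: image_cong)
  then show ?thesis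
    unfolding hyperedge_image_def by (intro image_cong refl)
qed

lemma blockmodel_eq_hyperedge_image: "blockmodel H E = hyperedge_image (\<lambda>a. E `` {a}) H"
  unfolding blockmodel_def hyperedge_image_def by auto

lemma krel_map_iff:
  "krel_map k A H B K f \<longleftrightarrow> f ` A \<subseteq> B \<and> (\<forall>i\<in>{1..k}. hyperedge_image f (H i) \<subseteq> K i)"
  unfolding krel_map_def hyperedge_image_subset_iff by blast

lemma reflects_hyperedges_iff:
  "reflects_hyperedges k A H K f \<longleftrightarrow> (\<forall>i\<in>{1..k}. reflects_edges A (H i) (K i) f)"
  unfolding reflects_hyperedges_def reflects_edges_def by blast

lemma positional_reduction_iff:
  assumes "krel_map k A H B K f"
  shows "positional_reduction k A H B K f \<longleftrightarrow>
    f ` A = B \<and> (\<forall>i\<in>{1..k}. reflects_edges A (H i) (K i) f)"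
  using assms unfolding positional_reduction_def reflects_hyperedges_iff by blast

lemma ker_rel_iff: "(a, a') \<in> ker_rel A f \<longleftrightarrow> a \<in> A \<and> a' \<in> A \<and> f a = f a'"
  unfolding ker_rel_def by simp

lemma equiv_ker_rel: "equiv A (ker_rel A f)"
  unfolding equiv_def refl_on_def sym_def trans_def ker_rel_def by auto

lemma image_ker_rel_class: "a \<in> A \<Longrightarrow> f ` (ker_rel A f `` {a}) = {f a}"
  unfolding ker_rel_def by auto

lemma ker_rel_related_sets_iff:
  assumes "U \<subseteq> A" and "U' \<subseteq> A"
  shows "(\<forall>u\<in>U. \<exists>u'\<in>U'. (u, u') \<in> ker_rel A f) \<and> (\<forall>u'\<in>U'. \<exists>u\<in>U. (u, u') \<in> ker_rel A f)
    \<longleftrightarrow> f ` U = f ` U'"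
  using assms unfolding ker_rel_iff set_eq_subset image_subset_iff image_iff
  by (auto simp: subset_iff) metis+

lemma regular_equivalence_ker_rel_iff:
  assumes "fhypergraph A H"
  shows "regular_equivalence A H (ker_rel A f) \<longleftrightarrow>
    (\<forall>a\<in>A. \<forall>a'\<in>A. \<forall>U. f a = f a' \<longrightarrow> (a, U) \<in> H \<longrightarrow> (\<exists>U'. (a', U') \<in> H \<and> f ` U' = f ` U))"
proof -
  have "(\<forall>u\<in>U. \<exists>u'\<in>U'. (u, u') \<in> ker_rel A f) \<and> (\<forall>u'\<in>U'. \<exists>u\<in>U. (u, u') \<in> ker_rel A f)
      \<longleftrightarrow> f ` U' = f ` U" if "(a, U) \<in> H" "(a', U') \<in> H" for a a' U U'
  proof -
    have "U \<subseteq> A" "U' \<subseteq> A"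
      using that assms unfolding fhypergraph_def by auto
    then show ?thesis
      using ker_rel_related_sets_iff by metis
  qed
  then have "(\<exists>U'. (a', U') \<in> H \<and> (\<forall>u\<in>U. \<exists>u'\<in>U'. (u, u') \<in> ker_rel A f)
        \<and> (\<forall>u'\<in>U'. \<exists>u\<in>U. (u, u') \<in> ker_rel A f))
      \<longleftrightarrow> (\<exists>U'. (a', U') \<in> H \<and> f ` U' = f ` U)" if "(a, U) \<in> H" for a a' U
    using that by blast
  then show ?thesis
    unfolding regular_equivalence_def ker_rel_iff using equiv_ker_rel by auto
qed

lemma reflects_edges_imp_regular_equivalence:
  assumes "fhypergraph A H" and "hyperedge_image f H \<subseteq> K" and "reflects_edges A H K f"
  shows "regular_equivalence A H (ker_rel A f)"
  unfolding regular_equivalence_ker_rel_iff[OF assms(1)]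
proof (intro ballI allI impI)
  fix a a' U
  assume "a \<in> A" "a' \<in> A" "f a = f a'" "(a, U) \<in> H"
  then have "(f a', f ` U) \<in> K"
    using assms(2) unfolding hyperedge_image_subset_iff by metis
  then show "\<exists>U'. (a', U') \<in> H \<and> f ` U' = f ` U"
    using assms(3) \<open>a' \<in> A\<close> unfolding reflects_edges_def by blast
qed

lemma reflects_edges_imp_hyperedge_image_eq:
  assumes "fhypergraph B K" and "f ` A = B" and "hyperedge_image f H \<subseteq> K"
    and "reflects_edges A H K f"
  shows "K = hyperedge_image f H"
proof (rule subset_antisym[OF subrelI assms(3)])
  fix b W
  assume "(b, W) \<in> K"
  then have "b \<in> f ` A"
    using assms(1,2) unfolding fhypergraph_def by auto
  then obtain a where "a \<in> A" "b = f a"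
    by blast
  then obtain V where "(a, V) \<in> H" "f ` V = W"
    using assms(4) \<open>(b, W) \<in> K\<close> unfolding reflects_edges_def by blast
  then show "(b, W) \<in> hyperedge_image f H"
    using \<open>b = f a\<close> unfolding hyperedge_image_iff by blast
qed

lemma reflects_edges_if_regular_equivalence:
  assumes "fhypergraph A H" and "regular_equivalence A H (ker_rel A f)"
    and "K = hyperedge_image f H"
  shows "reflects_edges A H K f"
  unfolding reflects_edges_def
proof (intro ballI allI impI)
  fix a W
  assume "a \<in> A" "(f a, W) \<in> K"
  then have "(f a, W) \<in> hyperedge_image f H"
    using assms(3) by simp
  then obtain a0 U0 where "(a0, U0) \<in> H" "f a0 = f a" "W = f ` U0"
    unfolding hyperedge_image_iff by metis
  moreover have "a0 \<in> A"
    using assms(1) \<open>(a0, U0) \<in> H\<close> unfolding fhypergraph_def by auto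
  ultimately obtain V where "(a, V) \<in> H" "f ` V = W"
    using assms(2) \<open>a \<in> A\<close> unfolding regular_equivalence_ker_rel_iff[OF assms(1)] by metis
  moreover have "V \<subseteq> A"
    using assms(1) \<open>(a, V) \<in> H\<close> unfolding fhypergraph_def by auto
  ultimately show "\<exists>V\<subseteq>A. (a, V) \<in> H \<and> f ` V = W"
    by blast
qed

lemma reflects_edges_iff_regular_equivalence:
  assumes "fhypergraph A H" and "fhypergraph B K" and "f ` A = B"
    and "hyperedge_image f H \<subseteq> K"
  shows "reflects_edges A H K f \<longleftrightarrow>
    regular_equivalence A H (ker_rel A f) \<and> K = hyperedge_image f H"
  using reflects_edges_imp_regular_equivalence[OF assms(1,4)]
    reflects_edges_imp_hyperedge_image_eq[OF assms(2-4)]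
    reflects_edges_if_regular_equivalence[OF assms(1)] by blast

lemma ex_bij_quotient_ker_rel_iff:
  "(\<exists>g. bij_betw g (A // ker_rel A f) B \<and> (\<forall>a\<in>A. g (ker_rel A f `` {a}) = f a)) \<longleftrightarrow> f ` A = B"
proof
  assume "\<exists>g. bij_betw g (A // ker_rel A f) B \<and> (\<forall>a\<in>A. g (ker_rel A f `` {a}) = f a)"
  then obtain g where "bij_betw g (A // ker_rel A f) B" "\<forall>a\<in>A. g (ker_rel A f `` {a}) = f a"
    by blast
  then have "f ` A = g ` (A // ker_rel A f)"
    unfolding proj_image[symmetric] image_comp proj_def by (auto intro!: image_cong)
  then show "f ` A = B"
    using \<open>bij_betw g (A // ker_rel A f) B\<close> unfolding bij_betw_def by simp
next
  assume "f ` A = B"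
  define g where "g X = the_elem (f ` X)" for X
  have g_class: "\<forall>a\<in>A. g (ker_rel A f `` {a}) = f a"
    unfolding g_def by (simp add: image_ker_rel_class)
  have "inj_on g (A // ker_rel A f)"
  proof (rule inj_onI)
    fix X Y
    assume "X \<in> A // ker_rel A f" "Y \<in> A // ker_rel A f" "g X = g Y"
    obtain a b where "a \<in> A" "X = ker_rel A f `` {a}" "b \<in> A" "Y = ker_rel A f `` {b}"
      using \<open>X \<in> A // ker_rel A f\<close> \<open>Y \<in> A // ker_rel A f\<close> by (elim quotientE)
    moreover from this have "f a = f b"
      using \<open>g X = g Y\<close> g_class by simp
    ultimately show "X = Y"
      by (simp add: eq_equiv_class_iff[OF equiv_ker_rel] ker_rel_iff)
  qed
  moreover have "g ` (A // ker_rel A f) = B"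
    using \<open>f ` A = B\<close> g_class unfolding proj_image[symmetric] image_comp proj_def
    by (auto intro!: image_cong)
  ultimately show "\<exists>g. bij_betw g (A // ker_rel A f) B \<and> (\<forall>a\<in>A. g (ker_rel A f `` {a}) = f a)"
    using g_class unfolding bij_betw_def by blast
qed

lemma hyperedge_image_blockmodel_ker_rel:
  assumes "fhypergraph A H" and "\<forall>a\<in>A. g (ker_rel A f `` {a}) = f a"
  shows "hyperedge_image g (blockmodel H (ker_rel A f)) = hyperedge_image f H"
  unfolding blockmodel_eq_hyperedge_image hyperedge_image_comp
  using assms by (intro hyperedge_image_cong) auto

lemma ex_bij_quotient_blockmodels_iff:
  assumes "\<forall>i\<in>I. fhypergraph A (H i)"
  shows "(\<exists>g. bij_betw g (A // ker_rel A f) B \<and> (\<forall>a\<in>A. g (ker_rel A f `` {a}) = f a) \<and>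
      (\<forall>i\<in>I. K i = hyperedge_image g (blockmodel (H i) (ker_rel A f))))
    \<longleftrightarrow> f ` A = B \<and> (\<forall>i\<in>I. K i = hyperedge_image f (H i))"
    (is "(\<exists>g. ?bij g \<and> ?factors g \<and> ?blockmodels g) \<longleftrightarrow> _")
proof -
  have blockmodels_iff: "?blockmodels g \<longleftrightarrow> (\<forall>i\<in>I. K i = hyperedge_image f (H i))"
    if "?factors g" for g
    using hyperedge_image_blockmodel_ker_rel[OF _ that] assms by simp
  show ?thesis
  proof
    assume "\<exists>g. ?bij g \<and> ?factors g \<and> ?blockmodels g"
    then obtain g where "?bij g" "?factors g" "?blockmodels g"
      by blast
    then show "f ` A = B \<and> (\<forall>i\<in>I. K i = hyperedge_image f (H i))"
      using ex_bij_quotient_ker_rel_iff[of A f B] blockmodels_iff by blast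
  next
    assume "f ` A = B \<and> (\<forall>i\<in>I. K i = hyperedge_image f (H i))"
    moreover obtain g where "?bij g" "?factors g"
      using ex_bij_quotient_ker_rel_iff[of A f B] calculation by blast
    ultimately show "\<exists>g. ?bij g \<and> ?factors g \<and> ?blockmodels g"
      using blockmodels_iff by blast
  qed
qed

theorem lemma6p5:
  fixes k :: nat
    and A :: "'a set" and H :: "nat \<Rightarrow> ('a \<times> 'a set) set"
    and B :: "'b set" and K :: "nat \<Rightarrow> ('b \<times> 'b set) set"
    and f :: "'a \<Rightarrow> 'b"
  assumes "krel_fhypergraph k A H"
    and "krel_fhypergraph k B K"
    and "krel_map k A H B K f"
  shows "positional_reduction k A H B K f \<longleftrightarrow>
    ((\<forall>i\<in>{1..k}. regular_equivalence A (H i) (ker_rel A f)) \<and>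
     (\<exists>g. bij_betw g (A // ker_rel A f) B \<and>
          (\<forall>a\<in>A. g (ker_rel A f `` {a}) = f a) \<and>
          (\<forall>i\<in>{1..k}. K i = (\<lambda>(X, Y). (g X, g ` Y)) ` blockmodel (H i) (ker_rel A f))))"
proof -
  have H: "\<forall>i\<in>{1..k}. fhypergraph A (H i)" and K: "\<forall>i\<in>{1..k}. fhypergraph B (K i)"
    using assms(1,2) unfolding krel_fhypergraph_def by blast+
  have maps_edges: "\<forall>i\<in>{1..k}. hyperedge_image f (H i) \<subseteq> K i"
    using assms(3) unfolding krel_map_iff by blast
  have "positional_reduction k A H B K f \<longleftrightarrow>
      f ` A = B \<and> (\<forall>i\<in>{1..k}. reflects_edges A (H i) (K i) f)"
    using assms(3) by (rule positional_reduction_iff)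
  also have "\<dots> \<longleftrightarrow> f ` A = B \<and> (\<forall>i\<in>{1..k}.
      regular_equivalence A (H i) (ker_rel A f) \<and> K i = hyperedge_image f (H i))"
  proof (rule conj_cong[OF refl])
    assume "f ` A = B"
    then show "(\<forall>i\<in>{1..k}. reflects_edges A (H i) (K i) f) \<longleftrightarrow> (\<forall>i\<in>{1..k}.
        regular_equivalence A (H i) (ker_rel A f) \<and> K i = hyperedge_image f (H i))"
      using H K maps_edges by (intro ball_cong refl reflects_edges_iff_regular_equivalence) auto
  qed
  also have "\<dots> \<longleftrightarrow> (\<forall>i\<in>{1..k}. regular_equivalence A (H i) (ker_rel A f)) \<and>
      (\<exists>g. bij_betw g (A // ker_rel A f) B \<and> (\<forall>a\<in>A. g (ker_rel A f `` {a}) = f a) \<and>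
        (\<forall>i\<in>{1..k}. K i = hyperedge_image g (blockmodel (H i) (ker_rel A f))))"
    unfolding ex_bij_quotient_blockmodels_iff[OF H] by blast
  finally show ?thesis
    unfolding hyperedge_image_def .
qed

end
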